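(* Let $R$ be a commutative ring with $1$ such that every maximal ideal of $R$ is quasi-pure. Then $R$ is zero-dimensional, i.e. every prime ideal of $R$ is maximal.
   Context: An ideal $I$ of a commutative ring $R$ is called quasi-pure if for each $f\in I$ there exists an integer $n\ge 1$ such that $\operatorname{Ann}(f^n)+I=R$ (equivalently, for each $f\in I$ there is $g\in I$ with $f(1-g)$ nilpotent). *)

theory Defs
  imports "HOL-Algebra.Algebra"
begin

definition ann :: "('a, 'b) ring_scheme \<Rightarrow> 'a \<Rightarrow> 'a set" where
  "ann R f = {x \<in> carrier R. x \<otimes>\<^bsub>R\<^esub> f = \<zero>\<^bsub>R\<^esub>}"

definition quasi_pure :: "('a, 'b) ring_scheme \<Rightarrow> 'a set \<Rightarrow> bool" where
  "quasi_pure R I \<longleftrightarrow> ideal I R \<and>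
     (\<forall>f\<in>I. \<exists>n::nat. n \<ge> 1 \<and> ann R (f [^]\<^bsub>R\<^esub> n) <+>\<^bsub>R\<^esub> I = carrier R)"

end

theory Submission
  imports Defs
begin

text \<open>
  Let \<open>P \<subseteq> M\<close> with \<open>P\<close> prime and \<open>M\<close> maximal, and let \<open>f \<in> M\<close>. Quasi-purity gives
  \<open>1 = a + m\<close> with \<open>a f\<^sup>n = 0\<close> and \<open>m \<in> M\<close>. If \<open>f \<notin> P\<close> then \<open>f\<^sup>n \<notin> P\<close>, so primality
  forces \<open>a \<in> P \<subseteq> M\<close> and hence \<open>1 \<in> M\<close>, which is absurd. Thus \<open>M = P\<close>.
\<close>

lemma (in cring) ideal_subset_maximalideal:
  assumes "ideal I R" and "\<one> \<notin> I"
  shows "\<exists>M. maximalideal M R \<and> I \<subseteq> M"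
proof -
  define A where "A = {J. ideal J R \<and> I \<subseteq> J \<and> \<one> \<notin> J}"
  have "\<exists>M\<in>A. \<forall>J\<in>A. M \<subseteq> J \<longrightarrow> J = M"
  proof (rule subset_Zorn_nonempty)
    show "A \<noteq> {}" using assms unfolding A_def by blast
  next
    fix C assume "C \<noteq> {}" and chain: "subset.chain A C"
    then have "subset.chain {J. ideal J R} C"
      unfolding A_def pred_on.chain_def by blast
    then have "ideal (\<Union>C) R"
      using chain_Union_is_ideal \<open>C \<noteq> {}\<close> by presburger
    then show "\<Union>C \<in> A"
      using \<open>C \<noteq> {}\<close> chain unfolding A_def pred_on.chain_def by blast
  qed
  then obtain M where "M \<in> A" and max_A: "\<And>J. J \<in> A \<Longrightarrow> M \<subseteq> J \<Longrightarrow> J = M"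
    by blast
  then have M: "ideal M R" "I \<subseteq> M" "\<one> \<notin> M"
    unfolding A_def by simp_all
  have max: "J = M" if "ideal J R" "M \<subseteq> J" "\<one> \<notin> J" for J
    using that M(2) max_A[of J] unfolding A_def by blast
  have "maximalideal M R"
  proof (rule maximalidealI[OF M(1)])
    show "carrier R \<noteq> M" using M(3) by blast
  next
    fix J assume "ideal J R" "M \<subseteq> J" "J \<subseteq> carrier R"
    then show "J = M \<or> J = carrier R"
      using max ideal.one_imp_carrier by blast
  qed
  with M(2) show ?thesis by blast
qed

lemma (in primeideal) pow_notin:
  assumes "a \<in> carrier R" and "a \<notin> I"
  shows "a [^] (n::nat) \<notin> I"
proof (induction n)
  case 0
  show ?case using I_notcarr one_imp_carrier by auto
next
  case (Suc n)
  then show ?case using assms I_prime[of "a [^] n" a] by auto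
qed

lemma (in primeideal) quasi_pure_proper_superideal_eq:
  assumes qp: "quasi_pure R J" and "I \<subseteq> J" and "\<one> \<notin> J"
  shows "J = I"
proof -
  have J: "ideal J R" using qp unfolding quasi_pure_def by blast
  have "f \<in> I" if f: "f \<in> J" for f
  proof (rule ccontr)
    assume "f \<notin> I"
    have f_carr: "f \<in> carrier R" using ideal.Icarr[OF J f] .
    obtain n :: nat where "ann R (f [^] n) <+> J = carrier R"
      using qp f unfolding quasi_pure_def by blast
    then obtain a m where a: "a \<in> ann R (f [^] n)" and "m \<in> J" and one: "\<one> = a \<oplus> m"
      using one_closed unfolding set_add_def' by blast
    have "a \<in> carrier R" and "a \<otimes> f [^] n \<in> I"
      using a unfolding ann_def by auto
    then have "a \<in> I"
      using I_prime pow_notin[OF f_carr \<open>f \<notin> I\<close>] f_carr by blast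
    then have "a \<oplus> m \<in> J"
      using \<open>I \<subseteq> J\<close> \<open>m \<in> J\<close> additive_subgroup.a_closed[OF ideal.axioms(1)[OF J]] by blast
    with one \<open>\<one> \<notin> J\<close> show False by simp
  qed
  with \<open>I \<subseteq> J\<close> show ?thesis by blast
qed

theorem lemma2p6:
  fixes R (structure)
  assumes "cring R"
    and "\<And>M. maximalideal M R \<Longrightarrow> quasi_pure R M"
  shows "\<forall>P. primeideal P R \<longrightarrow> maximalideal P R"
proof (intro allI impI)
  interpret cring R by fact
  fix P assume P: "primeideal P R"
  then have "\<one> \<notin> P"
    using primeideal.I_notcarr ideal.one_imp_carrier primeideal.axioms(1) by metis
  then obtain M where M: "maximalideal M R" "P \<subseteq> M"
    using ideal_subset_maximalideal P primeideal.axioms(1) by blast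
  have "\<one> \<notin> M"
    using M(1) maximalideal.I_notcarr ideal.one_imp_carrier maximalideal.axioms(1) by metis
  then have "M = P"
    using primeideal.quasi_pure_proper_superideal_eq[OF P assms(2)[OF M(1)] M(2)] by blast
  with M(1) show "maximalideal P R" by simp
qed

end
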